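(* Let $s\ge 1$, $q=4^{2s}$, and let $\theta$ be the automorphism of $F_q$ given by $\theta(a)=a^{4^s}$. Let $n$ be an even positive integer and suppose $x^n-1=h(x)g(x)$ in $F_q[x;\theta]$, where the degree of $g(x)$ is even. If $h(x)$ is a palindromic polynomial, then $g(x)$ is also a palindromic polynomial.
   Context: $F_q[x;\theta]$ is the skew polynomial ring: polynomials $\sum a_ix^i$ with $a_i\in F_q$, usual addition, and multiplication determined by $xa=\theta(a)x$ for $a\in F_q$. A polynomial $f(x)=a_0+a_1x+\dots+a_tx^t$ of degree $t$ is palindromic if $a_i=a_{t-i}$ for all $i\in\{0,\ldots,t\}$. *)

theory Defs
  imports "HOL-Computational_Algebra.Polynomial"
begin

text \<open>Skew polynomial ring F[x;theta]: elements are represented by their coefficient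
  sequences (type 'a poly); addition is the usual one, multiplication is determined by
  x a = theta(a) x, i.e. (sum a_i x^i)(sum b_j x^j) = sum a_i theta^i(b_j) x^(i+j).\<close>

definition skew_mult :: "('a::comm_ring_1 \<Rightarrow> 'a) \<Rightarrow> 'a poly \<Rightarrow> 'a poly \<Rightarrow> 'a poly" where
  "skew_mult \<theta> p q = (\<Sum>i\<le>degree p. monom (coeff p i) i * map_poly (\<theta> ^^ i) q)"

definition palindromic :: "'a::zero poly \<Rightarrow> bool" where
  "palindromic f \<longleftrightarrow> (\<forall>i\<le>degree f. coeff f i = coeff f (degree f - i))"

end

theory Submission
  imports Defs
begin

text \<open>
  As q = 4^(2s), the automorphism \<theta> is an involution and F_q has characteristic 2, so
  x^n - 1 is self-reciprocal. Reversing the coefficients of a skew product p g with deg p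
  even gives p* g*, because \<theta>^(deg p - i) = \<theta>^i. Here deg h = n - deg g is even, hence
  h g = x^n - 1 = (h g)* = h* g* = h g*, and cancelling h on the left (its constant term is
  its leading coefficient, hence nonzero) gives g* = g.
\<close>

lemma finite_field_power_card_eq_self:
  fixes a :: "'a::{field,finite}"
  shows "a ^ card (UNIV :: 'a set) = a"
proof (cases "a = 0")
  case False
  let ?U = "UNIV - {0::'a}"
  have "\<Prod>?U = (\<Prod>x\<in>?U. a * x)"
    using False by (intro prod.reindex_bij_witness[where i = "(*) a" and j = "\<lambda>x. x / a"]) auto
  also have "\<dots> = a ^ card ?U * \<Prod>?U"
    by (simp add: prod.distrib)
  finally have "a ^ (card (UNIV :: 'a set) - 1) = 1"
    by (simp add: card_Diff_singleton)
  then show ?thesis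
    by (metis card_gt_0_iff finite_UNIV UNIV_not_empty mult_1 power_minus_mult)
qed (simp add: card_gt_0_iff)

lemma funpow_involution:
  assumes "\<And>a. T (T a) = a"
  shows "(T ^^ i) x = (if even i then x else T x)"
  by (induction i) (auto simp: assms)

lemma funpow_fixpoint:
  assumes "T z = z"
  shows "(T ^^ i) z = z"
  using assms by (induction i) auto

lemma coeff_skew_mult:
  fixes T :: "'a::comm_ring_1 \<Rightarrow> 'a"
  assumes "T 0 = 0" and "degree p \<le> K"
  shows "coeff (skew_mult T p q) j =
    (\<Sum>i\<le>K. if i \<le> j then coeff p i * (T ^^ i) (coeff q (j - i)) else 0)"
proof -
  have "coeff (skew_mult T p q) j =
      (\<Sum>i\<le>degree p. if i \<le> j then coeff p i * (T ^^ i) (coeff q (j - i)) else 0)"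
    unfolding skew_mult_def coeff_sum
    by (intro sum.cong) (auto simp: coeff_monom_mult coeff_map_poly funpow_fixpoint assms(1))
  also have "\<dots> = (\<Sum>i\<le>K. if i \<le> j then coeff p i * (T ^^ i) (coeff q (j - i)) else 0)"
    using assms(2) by (intro sum.mono_neutral_left) (auto simp: coeff_eq_0)
  finally show ?thesis .
qed

lemma coeff_skew_mult_atMost:
  fixes T :: "'a::comm_ring_1 \<Rightarrow> 'a"
  assumes "T 0 = 0"
  shows "coeff (skew_mult T p q) j = (\<Sum>i\<le>j. coeff p i * (T ^^ i) (coeff q (j - i)))"
proof -
  have "coeff (skew_mult T p q) j =
      (\<Sum>i\<le>j + degree p. if i \<le> j then coeff p i * (T ^^ i) (coeff q (j - i)) else 0)"
    using assms by (intro coeff_skew_mult) auto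
  also have "\<dots> = (\<Sum>i\<le>j. coeff p i * (T ^^ i) (coeff q (j - i)))"
    by (subst sum.inter_filter[symmetric]) (auto intro: sum.cong)
  finally show ?thesis .
qed

lemma coeff_skew_mult_eq_0:
  fixes T :: "'a::comm_ring_1 \<Rightarrow> 'a"
  assumes "T 0 = 0" and "degree p + degree q < j"
  shows "coeff (skew_mult T p q) j = 0"
  using assms
  by (auto simp: coeff_skew_mult[of T p "degree p"] coeff_eq_0 funpow_fixpoint intro!: sum.neutral)

lemma coeff_skew_mult_degree_add:
  fixes T :: "'a::comm_ring_1 \<Rightarrow> 'a"
  assumes "T 0 = 0"
  shows "coeff (skew_mult T p q) (degree p + degree q) =
    lead_coeff p * (T ^^ degree p) (lead_coeff q)"
proof -
  let ?k = "degree p" and ?m = "degree q"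
  have "coeff (skew_mult T p q) (?k + ?m) =
      (\<Sum>i\<le>?k. if i \<le> ?k + ?m then coeff p i * (T ^^ i) (coeff q (?k + ?m - i)) else 0)"
    using assms by (intro coeff_skew_mult) auto
  also have "\<dots> = (\<Sum>i\<le>?k. if i = ?k then lead_coeff p * (T ^^ ?k) (lead_coeff q) else 0)"
    using assms by (intro sum.cong) (auto simp: coeff_eq_0 funpow_fixpoint)
  finally show ?thesis by simp
qed

lemma skew_mult_0_left [simp]: "skew_mult T 0 q = 0"
  by (simp add: skew_mult_def)

lemma skew_mult_0_right [simp]:
  fixes T :: "'a::comm_ring_1 \<Rightarrow> 'a"
  shows "skew_mult T p 0 = 0"
  by (simp add: skew_mult_def)

lemma degree_skew_mult:
  fixes T :: "'a::idom \<Rightarrow> 'a"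
  assumes "T 0 = 0" and "inj T" and "p \<noteq> 0" and "q \<noteq> 0"
  shows "degree (skew_mult T p q) = degree p + degree q"
proof (rule order_antisym)
  show "degree (skew_mult T p q) \<le> degree p + degree q"
    using assms(1) by (intro degree_le) (simp add: coeff_skew_mult_eq_0)
  have "(T ^^ degree p) (lead_coeff q) \<noteq> (T ^^ degree p) 0"
    using assms(2,4) inj_fn[OF assms(2)] by (metis injD leading_coeff_0_iff)
  then have "coeff (skew_mult T p q) (degree p + degree q) \<noteq> 0"
    using assms(3) by (simp add: coeff_skew_mult_degree_add assms(1) funpow_fixpoint)
  then show "degree p + degree q \<le> degree (skew_mult T p q)"
    by (rule le_degree)
qed

lemma skew_mult_left_cancel:
  fixes T :: "'a::idom \<Rightarrow> 'a"
  assumes "T 0 = 0" and "inj T" and "coeff h 0 \<noteq> 0"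
    and "skew_mult T h a = skew_mult T h b"
  shows "a = b"
proof (rule poly_eqI)
  fix j
  show "coeff a j = coeff b j"
  proof (induction j rule: less_induct)
    case (less j)
    let ?t = "\<lambda>f i. coeff h i * (T ^^ i) (coeff f (j - i))"
    have "(\<Sum>i\<le>j. ?t a i) = (\<Sum>i\<le>j. ?t b i)"
      using assms(4) by (metis coeff_skew_mult_atMost[of T, OF assms(1)])
    moreover have "(\<Sum>i\<in>{..j} - {0}. ?t a i) = (\<Sum>i\<in>{..j} - {0}. ?t b i)"
      by (intro sum.cong) (auto simp: less)
    ultimately have "?t a 0 = ?t b 0"
      by (simp add: sum.remove[of "{..j}" 0])
    then show ?case
      using assms(3) by simp
  qed
qed

lemma reflect_poly_skew_mult:
  fixes T :: "'a::idom \<Rightarrow> 'a"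
  assumes T0: "T 0 = 0" and invol: "\<And>a. T (T a) = a"
    and "even (degree p)" and "p \<noteq> 0" and "q \<noteq> 0"
  shows "reflect_poly (skew_mult T p q) = skew_mult T (reflect_poly p) (reflect_poly q)"
proof (rule poly_eqI)
  fix j
  let ?k = "degree p" and ?m = "degree q"
  have "inj T"
    by (metis injI invol)
  then have deg: "degree (skew_mult T p q) = ?k + ?m"
    using assms by (intro degree_skew_mult) auto
  have rhs: "coeff (skew_mult T (reflect_poly p) (reflect_poly q)) j =
      (\<Sum>i\<le>?k. if i \<le> j then coeff p (?k - i) * (T ^^ i) (coeff (reflect_poly q) (j - i)) else 0)"
    unfolding coeff_skew_mult[of T, OF T0 degree_reflect_poly_le]
    by (intro sum.cong) (auto simp: coeff_reflect_poly)
  show "coeff (reflect_poly (skew_mult T p q)) j = coeff (skew_mult T (reflect_poly p) (reflect_poly q)) j"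
  proof (cases "j \<le> ?k + ?m")
    case False
    then show ?thesis
      unfolding rhs coeff_reflect_poly deg
      by (auto simp: coeff_reflect_poly funpow_fixpoint T0 intro!: sum.neutral)
  next
    case True
    have "coeff (skew_mult T p q) (?k + ?m - j) =
        (\<Sum>i\<le>?k. if i \<le> ?k + ?m - j then coeff p i * (T ^^ i) (coeff q (?k + ?m - j - i)) else 0)"
      using T0 by (intro coeff_skew_mult) auto
    also have "\<dots> = (\<Sum>i\<le>?k. if ?k - i \<le> ?k + ?m - j
        then coeff p (?k - i) * (T ^^ (?k - i)) (coeff q (?k + ?m - j - (?k - i))) else 0)"
      by (rule sum.reindex_bij_witness[where i = "\<lambda>i. ?k - i" and j = "\<lambda>i. ?k - i"]) auto
    also have "\<dots> = (\<Sum>i\<le>?k. if i \<le> j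
        then coeff p (?k - i) * (T ^^ i) (coeff (reflect_poly q) (j - i)) else 0)"
    proof (intro sum.cong refl)
      fix i
      assume "i \<in> {..?k}"
      then have "T ^^ (?k - i) = T ^^ i"
        using assms(3) by (auto simp: funpow_involution[OF invol])
      then show "(if ?k - i \<le> ?k + ?m - j
          then coeff p (?k - i) * (T ^^ (?k - i)) (coeff q (?k + ?m - j - (?k - i))) else 0) =
        (if i \<le> j then coeff p (?k - i) * (T ^^ i) (coeff (reflect_poly q) (j - i)) else 0)"
        using True \<open>i \<in> {..?k}\<close>
        by (auto simp: coeff_reflect_poly coeff_eq_0 funpow_fixpoint T0)
    qed
    finally show ?thesis
      using True by (simp add: rhs coeff_reflect_poly deg)
  qed
qed

lemma palindromic_iff_reflect_poly: "palindromic f \<longleftrightarrow> reflect_poly f = f"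
  unfolding palindromic_def poly_eq_iff coeff_reflect_poly
  by (metis coeff_eq_0 diff_diff_cancel diff_le_self linorder_not_le)

lemma degree_monom_one_minus_one:
  assumes "n > 0"
  shows "degree (monom 1 n - 1 :: 'a::comm_ring_1 poly) = n"
  using assms degree_add_eq_left[of "-1" "monom 1 n :: 'a poly"] by (simp add: degree_monom_eq)

lemma reflect_poly_monom_minus_one:
  assumes "(-1 :: 'a::comm_ring_1) = 1" and "n > 0"
  shows "reflect_poly (monom 1 n - 1 :: 'a poly) = monom 1 n - 1"
  using assms degree_monom_one_minus_one[OF assms(2)]
  by (auto simp: poly_eq_iff coeff_reflect_poly)

theorem theorem3:
  fixes s n :: nat and h g :: "'a::{field,finite} poly"
  assumes "s \<ge> 1"
    and "card (UNIV :: 'a set) = 4 ^ (2 * s)"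
    and "n > 0" and "even n"
    and "monom 1 n - 1 = skew_mult (\<lambda>a. a ^ (4 ^ s)) h g"
    and "even (degree g)"
    and "palindromic h"
  shows "palindromic g"
proof -
  define T where "T = (\<lambda>a::'a. a ^ (4 ^ s))"
  let ?P = "monom 1 n - 1 :: 'a poly"
  have T0: "T 0 = 0"
    by (simp add: T_def)
  have invol: "T (T a) = a" for a
  proof -
    have "T (T a) = a ^ (4 ^ s * 4 ^ s)"
      by (simp add: T_def power_mult)
    also have "4 ^ s * 4 ^ s = card (UNIV :: 'a set)"
      using assms(2) by (simp add: mult_2 power_add)
    finally show ?thesis
      by (simp add: finite_field_power_card_eq_self)
  qed
  have "inj T"
    by (metis injI invol)
  have "(-1 :: 'a) = 1"
    using finite_field_power_card_eq_self[of "-1 :: 'a"] assms(1,2) by simp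
  then have P_reflect: "reflect_poly ?P = ?P"
    using assms(3) by (rule reflect_poly_monom_minus_one)
  have P: "?P = skew_mult T h g"
    using assms(5) by (simp add: T_def)
  have deg_P: "degree ?P = n"
    using assms(3) by (rule degree_monom_one_minus_one)
  then have "?P \<noteq> 0"
    using assms(3) by auto
  then have "h \<noteq> 0" and "g \<noteq> 0"
    by (auto simp: P)
  have "degree h + degree g = n"
    using degree_skew_mult[OF T0 \<open>inj T\<close> \<open>h \<noteq> 0\<close> \<open>g \<noteq> 0\<close>] deg_P by (simp add: P)
  then have "even (degree h)"
    using assms(4,6) by (metis even_add)
  have h_reflect: "reflect_poly h = h"
    using assms(7) by (simp add: palindromic_iff_reflect_poly)
  have "skew_mult T h (reflect_poly g) = skew_mult T h g"
    using reflect_poly_skew_mult[OF T0 invol \<open>even (degree h)\<close> \<open>h \<noteq> 0\<close> \<open>g \<noteq> 0\<close>]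
    by (simp add: h_reflect P_reflect flip: P)
  then have "reflect_poly g = g"
    using skew_mult_left_cancel[OF T0 \<open>inj T\<close>] h_reflect \<open>h \<noteq> 0\<close>
    by (metis coeff_0_reflect_poly leading_coeff_0_iff)
  then show ?thesis
    by (simp add: palindromic_iff_reflect_poly)
qed

end
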